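(* Consider a target sender connected to an $(n,k)$ sampling mix, and an adversary who observes the sender of every message entering the mix, the recipient of every message leaving the mix, and who can additionally infer the state of the mix (the queue lengths). Then, by intersection attacks, the adversary can (almost surely, in finite time) identify all receivers of the target sender.
   Context: An $(n,k)$ sampling mix (integers $n$, $k$ with $2 \le k \le n-1$) consists of $n$ first-in first-out queues with infinite buffers; queue $i$ buffers the messages of sender $i$, which arrive according to a Poisson process of rate $\lambda$, independently across senders. Each sender sends its messages to receivers in its own set of at most $m$ receivers, these receiver sets being disjoint across senders. At each message arrival (say to queue $j$), $k$ queues are selected and released (a released queue instantly forwards its head message if non-empty): with probability $p_a$, queue $j$ together with $k-1$ queues chosen uniformly at random among the other $n-1$; with probability $1-p_a$, $k$ queues chosen uniformly at random among the other $n-1$ queues. An intersection attack is an attack in which the adversary collects sets of observed recipients of outgoing messages that must contain (or must not contain) receivers of the target sender, and combines (intersects/refines) them over time to isolate the target's receivers. *)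

theory Defs
  imports "HOL-Probability.Probability" "HOL-Library.Multiset"
begin

text \<open>Discrete-time (embedded jump chain) model of an (n,k) sampling mix.
  Senders / queues are 0..<n.  One step = one message arrival.
  A step input is (j, r, S): the message arrives from sender j, is addressed
  to receiver r, and the set S of k queues is released.\<close>

type_synonym 'r input = "nat \<times> 'r \<times> nat set"
type_synonym 'r mixstate = "nat \<Rightarrow> 'r list"

definition sel_pmf :: "nat \<Rightarrow> nat \<Rightarrow> real \<Rightarrow> nat \<Rightarrow> nat set pmf" where
  "sel_pmf n k pa j =
     do { b \<leftarrow> bernoulli_pmf pa;
          if b then map_pmf (insert j) (pmf_of_set {T. T \<subseteq> {0..<n} - {j} \<and> card T = k - 1})
          else pmf_of_set {T. T \<subseteq> {0..<n} - {j} \<and> card T = k} }"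

text \<open>Distribution of one step input: by the independent equal-rate Poisson
  arrivals, the sender of the next message is uniform; its recipient is drawn
  from the sender's receiver distribution q j.\<close>
definition input_pmf :: "nat \<Rightarrow> nat \<Rightarrow> real \<Rightarrow> (nat \<Rightarrow> 'r pmf) \<Rightarrow> 'r input pmf" where
  "input_pmf n k pa q =
     do { j \<leftarrow> pmf_of_set {0..<n};
          r \<leftarrow> q j;
          S \<leftarrow> sel_pmf n k pa j;
          return_pmf (j, r, S) }"

definition arrive :: "'r input \<Rightarrow> 'r mixstate \<Rightarrow> 'r mixstate" where
  "arrive x Q = (case x of (j, r, S) \<Rightarrow> Q(j := Q j @ [r]))"

definition mix_step :: "'r input \<Rightarrow> 'r mixstate \<Rightarrow> 'r mixstate" where
  "mix_step x Q = (case x of (j, r, S) \<Rightarrow>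
      (\<lambda>i. if i \<in> S then tl (arrive x Q i) else arrive x Q i))"

definition mix_out :: "'r input \<Rightarrow> 'r mixstate \<Rightarrow> 'r multiset" where
  "mix_out x Q = (case x of (j, r, S) \<Rightarrow>
      image_mset (\<lambda>i. hd (arrive x Q i)) (mset_set {i \<in> S. arrive x Q i \<noteq> []}))"

fun mix_state :: "'r input stream \<Rightarrow> nat \<Rightarrow> 'r mixstate" where
  "mix_state w 0 = (\<lambda>_. [])"
| "mix_state w (Suc t) = mix_step (w !! t) (mix_state w t)"

definition mix_obs :: "nat \<Rightarrow> 'r input stream \<Rightarrow> nat \<Rightarrow> nat \<times> nat list \<times> 'r multiset" where
  "mix_obs n w t = (fst (w !! t),
                    map (\<lambda>i. length (mix_state w (Suc t) i)) [0..<n],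
                    mix_out (w !! t) (mix_state w t))"

definition receiver_sets :: "nat \<Rightarrow> nat \<Rightarrow> (nat \<Rightarrow> 'r set) \<Rightarrow> bool" where
  "receiver_sets n m R \<longleftrightarrow>
     (\<forall>i<n. finite (R i) \<and> card (R i) \<le> m) \<and>
     (\<forall>i<n. \<forall>i'<n. i \<noteq> i' \<longrightarrow> R i \<inter> R i' = {})"

definition possible_input :: "nat \<Rightarrow> nat \<Rightarrow> real \<Rightarrow> (nat \<Rightarrow> 'r set) \<Rightarrow> 'r input \<Rightarrow> bool" where
  "possible_input n k pa R x = (case x of (j, r, S) \<Rightarrow>
      j < n \<and> r \<in> R j \<and> S \<in> set_pmf (sel_pmf n k pa j))"

definition identified ::
  "nat \<Rightarrow> nat \<Rightarrow> nat \<Rightarrow> real \<Rightarrow> (nat \<Rightarrow> 'r set) \<Rightarrow> nat \<Rightarrow> 'r input stream \<Rightarrow> nat \<Rightarrow> bool" where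
  "identified n k m pa R a w T \<longleftrightarrow>
     (\<forall>(R' :: nat \<Rightarrow> 'r set) w'.
        receiver_sets n m R' \<and> (\<Union>i<n. R' i) = (\<Union>i<n. R i) \<and>
        (\<forall>t<T. possible_input n k pa R' (w' !! t) \<and> mix_obs n w' t = mix_obs n w t)
        \<longrightarrow> R' a = R a)"

end

theory Submission
  imports Defs
begin

(* Queue lengths are observed, so at every step the adversary knows which queues emitted a
   message, and every message in queue e is a receiver of sender e. Hence when a receiver r
   leaves the mix at a step that does not release queue d, r is not a receiver of d. Once this
   has happened for every receiver r of every sender i and every other sender d, only the true
   assignment of receivers is consistent with the observations. Each such event happens almost
   surely: steps releasing i but not d have positive probability and are independent of the
   past, while r is infinitely often at the head of queue i (or is forwarded at once from an
   empty queue i), so a conditional Borel-Cantelli argument applies. *)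

lemma card_less_Suc_conv:
  "card {t. t < Suc N \<and> P t} = (if P 0 then 1 else 0) + card {t. t < N \<and> P (Suc t)}"
proof -
  have "{t. t < Suc N \<and> P t} = {t \<in> {0}. P t} \<union> Suc ` {t. t < N \<and> P (Suc t)}"
    by (auto simp: less_Suc_eq_0_disj)
  moreover have "card \<dots> = card {t \<in> {0}. P t} + card {t. t < N \<and> P (Suc t)}"
    by (subst card_Un_disjoint) (auto simp: card_image)
  moreover have "{t \<in> {0}. P t} = (if P 0 then {0} else {})"
    by auto
  ultimately show ?thesis
    by simp
qed

lemma INFM_imp_card_ge:
  fixes P :: "nat \<Rightarrow> bool"
  assumes "\<exists>\<^sub>\<infinity>t. P t"
  shows "\<exists>N. m \<le> card {t. t < N \<and> P t}"
proof -
  obtain B where B: "finite B" "card B = m" "B \<subseteq> {t. P t}"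
    using infinite_arbitrarily_large assms unfolding INFM_iff_infinite by blast
  obtain N where "B \<subseteq> {..<N}"
    using finite_nat_bounded[OF B(1)] by blast
  with B(3) have "card B \<le> card {t. t < N \<and> P t}"
    by (intro card_mono) auto
  with B(2) show ?thesis
    by blast
qed

lemma finite_ball_ex_less:
  fixes P :: "'a \<Rightarrow> nat \<Rightarrow> bool"
  assumes "finite Y" "\<forall>y\<in>Y. \<exists>t. P y t"
  shows "\<exists>T. \<forall>y\<in>Y. \<exists>t<T. P y t"
  using assms
proof (induction Y rule: finite_induct)
  case (insert x Y)
  then obtain T t where T: "\<forall>y\<in>Y. \<exists>t<T. P y t" and "P x t"
    by auto
  have "\<exists>t'<max T (Suc t). P y t'" if "y \<in> insert x Y" for y
  proof (cases "y = x")
    case True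
    with \<open>P x t\<close> show ?thesis
      by (intro exI[of _ t]) simp
  next
    case False
    with T that obtain t' where "t' < T" "P y t'"
      by auto
    then show ?thesis
      by (intro exI[of _ t']) simp
  qed
  then show ?case
    by blast
qed simp

lemma subsets_with_card_nonempty:
  "finite A \<Longrightarrow> m \<le> card A \<Longrightarrow> {T. T \<subseteq> A \<and> card T = m} \<noteq> {}"
  using exists_subset_between[of "{}" m A] by auto

lemma exists_subset_between_atLeastLessThan:
  assumes "Y \<subseteq> {0..<n} - X" "X \<subseteq> {0..<n}" "card Y \<le> l" "l \<le> n - card X"
  shows "\<exists>T. Y \<subseteq> T \<and> T \<subseteq> {0..<n} - X \<and> card T = l"
proof -
  have "finite X"
    using assms(2) finite_subset by blast
  with assms have "l \<le> card ({0..<n} - X)"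
    by (simp add: card_Diff_subset)
  with assms(1,3) show ?thesis
    by (intro exists_subset_between) auto
qed

section \<open>Visits of a history predicate in an i.i.d. stream\<close>

lemma prob_space_stream_space_pmf: "prob_space (stream_space (measure_pmf p))"
  by (rule prob_space.prob_space_stream_space) (rule prob_space_measure_pmf)

lemma emeasure_pmf_Compl: "emeasure (measure_pmf p) (- E) = ennreal (1 - measure_pmf.prob p E)"
  using measure_pmf.prob_compl[of E p]
  by (simp add: measure_pmf.emeasure_eq_measure Compl_eq_Diff_UNIV)

lemma sets_stream_space_stake_eq:
  "{w. stake N w = xs} \<in> sets (stream_space (measure_pmf p))"
proof (cases "length xs = N")
  case True
  then have "{w. stake N w = xs} =
      {w \<in> space (stream_space (measure_pmf p)). \<forall>t\<in>{..<N}. w !! t = xs ! t}"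
    by (auto simp: space_stream_space list_eq_iff_nth_eq)
  also have "\<dots> \<in> sets (stream_space (measure_pmf p))"
    by measurable
  finally show ?thesis .
next
  case False
  then have "{w. stake N w = xs} = {}"
    by auto
  then show ?thesis
    by simp
qed

text \<open>An arbitrary predicate on a finite prefix need not be measurable; restricting
  the prefix to the countable support of the pmf makes the set a countable union of cylinders.\<close>
lemma sets_stream_space_stake_pred:
  "{w. stake N w \<in> lists (set_pmf p) \<and> P (stake N w)} \<in> sets (stream_space (measure_pmf p))"
proof -
  have "{w. stake N w \<in> lists (set_pmf p) \<and> P (stake N w)} =
      (\<Union>xs\<in>{xs \<in> lists (set_pmf p). P xs}. {w. stake N w = xs})"
    by auto
  also have "\<dots> \<in> sets (stream_space (measure_pmf p))"
    by (rule sets.countable_UN'')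
      (auto intro: countable_subset[OF _ countable_lists] sets_stream_space_stake_eq)
  finally show ?thesis .
qed

lemma stake_in_lists_iff: "stake N w \<in> lists C \<longleftrightarrow> (\<forall>t<N. w !! t \<in> C)"
  by (induction N arbitrary: w) (auto simp: less_Suc_eq_0_disj)

lemma AE_stream_snth_in_set_pmf:
  "AE w in stream_space (measure_pmf p). \<forall>t. w !! t \<in> set_pmf p"
  using prob_space.AE_stream_all[OF prob_space_measure_pmf, of "\<lambda>x. x \<in> set_pmf p" p]
  unfolding stream_all_def by (simp add: AE_measure_pmf)

context
  fixes p :: "'a pmf" and E :: "'a set" and A :: "'a list \<Rightarrow> bool"
begin

text \<open>The letter drawn at a visit of \<open>A\<close> is independent of the history, so each of the
  \<open>m\<close> visits escapes \<open>E\<close> with probability \<open>1 - prob E\<close>.\<close>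
definition visits_avoiding :: "'a list \<Rightarrow> nat \<Rightarrow> nat \<Rightarrow> 'a stream set" where
  "visits_avoiding h N m = {w. stake N w \<in> lists (set_pmf p) \<and>
     m \<le> card {t. t < N \<and> A (h @ stake t w)} \<and>
     (\<forall>t<N. A (h @ stake t w) \<longrightarrow> w !! t \<notin> E)}"

lemma sets_visits_avoiding: "visits_avoiding h N m \<in> sets (stream_space (measure_pmf p))"
proof -
  have "visits_avoiding h N m = {w. stake N w \<in> lists (set_pmf p) \<and>
      (\<lambda>xs. m \<le> card {t. t < N \<and> A (h @ take t xs)} \<and>
         (\<forall>t<N. A (h @ take t xs) \<longrightarrow> xs ! t \<notin> E)) (stake N w)}"
    unfolding visits_avoiding_def by (auto simp: take_stake min_def cong: conj_cong)
  also have "\<dots> \<in> sets (stream_space (measure_pmf p))"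
    by (rule sets_stream_space_stake_pred)
  finally show ?thesis .
qed

lemma visits_avoiding_Suc:
  "{w \<in> space (stream_space (measure_pmf p)). x ## w \<in> visits_avoiding h (Suc N) m} =
     (if x \<in> set_pmf p \<and> \<not> (A h \<and> x \<in> E)
      then visits_avoiding (h @ [x]) N (m - (if A h then 1 else 0)) else {})"
proof -
  have "card {t. t < Suc N \<and> A (h @ stake t (x ## w))} =
      (if A h then 1 else 0) + card {t. t < N \<and> A ((h @ [x]) @ stake t w)}" for w
    by (subst card_less_Suc_conv) simp
  moreover have "(\<forall>t<Suc N. A (h @ stake t (x ## w)) \<longrightarrow> (x ## w) !! t \<notin> E) \<longleftrightarrow>
      \<not> (A h \<and> x \<in> E) \<and> (\<forall>t<N. A ((h @ [x]) @ stake t w) \<longrightarrow> w !! t \<notin> E)" for w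
    by (subst All_less_Suc2) simp
  ultimately show ?thesis
    unfolding visits_avoiding_def by (auto simp: space_stream_space)
qed

lemma emeasure_visits_avoiding_le:
  "emeasure (stream_space (measure_pmf p)) (visits_avoiding h N m)
     \<le> ennreal ((1 - measure_pmf.prob p E) ^ m)"
proof -
  interpret S: prob_space "stream_space (measure_pmf p)"
    by (rule prob_space_stream_space_pmf)
  let ?c = "measure_pmf.prob p E"
  show ?thesis
  proof (induction N arbitrary: h m)
    case 0
    show ?case
      using S.emeasure_le_1 by (cases m) (simp_all add: visits_avoiding_def)
  next
    case (Suc N)
    show ?case
    proof (cases "m = 0")
      case True
      then show ?thesis
        using S.emeasure_le_1 by simp
    next
      case False
      define m' where "m' = m - (if A h then 1 else 0)"
      define F where "F = (if A h then - E else UNIV)"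
      have "emeasure (stream_space (measure_pmf p)) (visits_avoiding h (Suc N) m) =
          (\<integral>\<^sup>+x. emeasure (stream_space (measure_pmf p))
             {w \<in> space (stream_space (measure_pmf p)). x ## w \<in> visits_avoiding h (Suc N) m}
           \<partial>measure_pmf p)"
        by (rule prob_space.emeasure_stream_space[OF prob_space_measure_pmf sets_visits_avoiding])
      also have "\<dots> \<le> (\<integral>\<^sup>+x. ennreal ((1 - ?c) ^ m') * indicator F x \<partial>measure_pmf p)"
        unfolding visits_avoiding_Suc m'_def F_def
        using Suc.IH by (intro nn_integral_mono) (auto split: split_indicator)
      also have "\<dots> = ennreal ((1 - ?c) ^ m') * emeasure (measure_pmf p) F"
        by (rule nn_integral_cmult_indicator) simp
      also have "\<dots> = ennreal ((1 - ?c) ^ m)"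
      proof (cases "A h")
        case True
        with \<open>m \<noteq> 0\<close> have "m = Suc m'"
          by (simp add: m'_def)
        with True show ?thesis
          by (simp add: F_def emeasure_pmf_Compl ennreal_mult'[symmetric] mult.commute)
      next
        case False
        then show ?thesis
          by (simp add: m'_def F_def measure_pmf.emeasure_space_1[simplified])
      qed
      finally show ?thesis .
    qed
  qed
qed

definition never_hits :: "'a stream set" where
  "never_hits = {w. \<forall>t. w !! t \<in> set_pmf p \<and> \<not> (A (stake t w) \<and> w !! t \<in> E)}"

lemma sets_never_hits: "never_hits \<in> sets (stream_space (measure_pmf p))"
proof -
  have "stake (Suc t) w \<in> lists (set_pmf p) \<longleftrightarrow> (\<forall>s\<le>t. w !! s \<in> set_pmf p)" for t w
    unfolding stake_in_lists_iff by (auto simp: less_Suc_eq_le)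
  then have "never_hits = (\<Inter>t. {w. stake (Suc t) w \<in> lists (set_pmf p) \<and>
      (\<lambda>xs. \<not> (A (take t xs) \<and> xs ! t \<in> E)) (stake (Suc t) w)})"
    unfolding never_hits_def by (auto simp: take_stake simp del: stake.simps)
  also have "\<dots> \<in> sets (stream_space (measure_pmf p))"
  proof -
    have "{w. stake (Suc t) w \<in> lists (set_pmf p) \<and>
        (\<lambda>xs. \<not> (A (take t xs) \<and> xs ! t \<in> E)) (stake (Suc t) w)}
        \<in> sets (stream_space (measure_pmf p))" for t
      by (rule sets_stream_space_stake_pred)
    then show ?thesis
      by (intro sets.countable_INT') auto
  qed
  finally show ?thesis .
qed

lemma never_hits_Int_visits_avoiding_iff:
  "w \<in> never_hits \<inter> visits_avoiding [] N m \<longleftrightarrow>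
     w \<in> never_hits \<and> m \<le> card {t. t < N \<and> A (stake t w)}"
  by (auto simp: visits_avoiding_def never_hits_def stake_in_lists_iff)

lemma emeasure_never_hits_visits_le:
  "emeasure (stream_space (measure_pmf p)) (\<Union>N. never_hits \<inter> visits_avoiding [] N m)
     \<le> ennreal ((1 - measure_pmf.prob p E) ^ m)"
proof -
  let ?S = "stream_space (measure_pmf p)"
  have "incseq (\<lambda>N. never_hits \<inter> visits_avoiding [] N m)"
  proof (rule incseq_SucI)
    fix N
    show "never_hits \<inter> visits_avoiding [] N m \<subseteq> never_hits \<inter> visits_avoiding [] (Suc N) m"
    proof
      fix w
      assume "w \<in> never_hits \<inter> visits_avoiding [] N m"
      moreover have "card {t. t < N \<and> A (stake t w)} \<le> card {t. t < Suc N \<and> A (stake t w)}"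
        by (rule card_mono) auto
      ultimately show "w \<in> never_hits \<inter> visits_avoiding [] (Suc N) m"
        unfolding never_hits_Int_visits_avoiding_iff by simp
    qed
  qed
  moreover have "never_hits \<inter> visits_avoiding [] N m \<in> sets ?S" for N
    using sets_never_hits sets_visits_avoiding by (rule sets.Int)
  ultimately have "emeasure ?S (\<Union>N. never_hits \<inter> visits_avoiding [] N m) =
      (SUP N. emeasure ?S (never_hits \<inter> visits_avoiding [] N m))"
    by (intro SUP_emeasure_incseq[symmetric]) auto
  also have "\<dots> \<le> ennreal ((1 - measure_pmf.prob p E) ^ m)"
  proof (rule SUP_least)
    fix N
    have "emeasure ?S (never_hits \<inter> visits_avoiding [] N m) \<le> emeasure ?S (visits_avoiding [] N m)"
      using sets_visits_avoiding by (intro emeasure_mono) auto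
    then show "emeasure ?S (never_hits \<inter> visits_avoiding [] N m)
        \<le> ennreal ((1 - measure_pmf.prob p E) ^ m)"
      using emeasure_visits_avoiding_le order_trans by blast
  qed
  finally show ?thesis .
qed

lemma never_hits_visits_null:
  assumes "measure_pmf.prob p E > 0"
  shows "(\<Inter>m. \<Union>N. never_hits \<inter> visits_avoiding [] N m) \<in> null_sets (stream_space (measure_pmf p))"
proof -
  let ?S = "stream_space (measure_pmf p)" and ?c = "measure_pmf.prob p E"
  and ?B = "\<lambda>m. \<Union>N. never_hits \<inter> visits_avoiding [] N m"
  interpret S: prob_space ?S
    by (rule prob_space_stream_space_pmf)
  have "never_hits \<inter> visits_avoiding [] N m \<in> sets ?S" for N m
    using sets_never_hits sets_visits_avoiding by (rule sets.Int)
  then have B_sets: "?B m \<in> sets ?S" for m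
    by (intro sets.countable_UN) auto
  then have Inter_sets: "(\<Inter>m. ?B m) \<in> sets ?S"
    by (intro sets.countable_INT) auto
  have "measure ?S (\<Inter>m. ?B m) \<le> (1 - ?c) ^ m" for m
  proof -
    have "emeasure ?S (\<Inter>m. ?B m) \<le> emeasure ?S (?B m)"
      using B_sets by (intro emeasure_mono) auto
    then have "emeasure ?S (\<Inter>m. ?B m) \<le> ennreal ((1 - ?c) ^ m)"
      using emeasure_never_hits_visits_le order_trans by blast
    then show ?thesis
      by (simp add: S.emeasure_eq_measure)
  qed
  moreover have "(\<lambda>m. (1 - ?c) ^ m) \<longlonglongrightarrow> 0"
    using assms by (intro LIMSEQ_realpow_zero) auto
  ultimately have "measure ?S (\<Inter>m. ?B m) \<le> 0"
    by (intro LIMSEQ_le_const) auto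
  then show ?thesis
    using Inter_sets by (simp add: S.emeasure_eq_measure null_sets_def antisym)
qed

end

text \<open>A conditional form of the second Borel--Cantelli lemma.\<close>
lemma AE_hit_if_INFM:
  assumes "measure_pmf.prob p E > 0"
  shows "AE w in stream_space (measure_pmf p).
           (\<exists>\<^sub>\<infinity>t. A (stake t w)) \<longrightarrow> (\<exists>t. A (stake t w) \<and> w !! t \<in> E)"
proof -
  have "AE w in stream_space (measure_pmf p).
      w \<notin> (\<Inter>m. \<Union>N. never_hits p E A \<inter> visits_avoiding p E A [] N m)"
    using never_hits_visits_null[OF assms] by (rule AE_not_in)
  then show ?thesis
    using AE_stream_snth_in_set_pmf
  proof eventually_elim
    case (elim w)
    show ?case
    proof (rule impI, rule ccontr)
      assume INFM: "\<exists>\<^sub>\<infinity>t. A (stake t w)" and "\<nexists>t. A (stake t w) \<and> w !! t \<in> E"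
      with elim have "w \<in> never_hits p E A"
        by (simp add: never_hits_def)
      have "w \<in> (\<Union>N. never_hits p E A \<inter> visits_avoiding p E A [] N m)" for m
      proof -
        obtain N where "m \<le> card {t. t < N \<and> A (stake t w)}"
          using INFM_imp_card_ge[OF INFM] by blast
        with \<open>w \<in> never_hits p E A\<close> have "w \<in> never_hits p E A \<inter> visits_avoiding p E A [] N m"
          unfolding never_hits_Int_visits_avoiding_iff by simp
        then show ?thesis
          by blast
      qed
      with elim(1) show False
        by blast
    qed
  qed
qed

lemma AE_INFM_hit_if_INFM:
  assumes "measure_pmf.prob p E > 0"
  shows "AE w in stream_space (measure_pmf p).
           (\<exists>\<^sub>\<infinity>t. A (stake t w)) \<longrightarrow> (\<exists>\<^sub>\<infinity>t. A (stake t w) \<and> w !! t \<in> E)"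
proof -
  have "AE w in stream_space (measure_pmf p).
      (\<exists>\<^sub>\<infinity>t. A (stake t w) \<and> N \<le> length (stake t w)) \<longrightarrow>
      (\<exists>t. (A (stake t w) \<and> N \<le> length (stake t w)) \<and> w !! t \<in> E)" for N
    using assms by (rule AE_hit_if_INFM)
  then have "AE w in stream_space (measure_pmf p). \<forall>N.
      (\<exists>\<^sub>\<infinity>t. A (stake t w) \<and> N \<le> t) \<longrightarrow> (\<exists>t. A (stake t w) \<and> N \<le> t \<and> w !! t \<in> E)"
    unfolding AE_all_countable by simp
  then show ?thesis
  proof (rule eventually_mono, intro impI)
    fix w
    assume hit: "\<forall>N. (\<exists>\<^sub>\<infinity>t. A (stake t w) \<and> N \<le> t) \<longrightarrow> (\<exists>t. A (stake t w) \<and> N \<le> t \<and> w !! t \<in> E)"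
      and INFM: "\<exists>\<^sub>\<infinity>t. A (stake t w)"
    have "\<exists>\<^sub>\<infinity>t. A (stake t w) \<and> N \<le> t" for N
      using INFM MOST_ge_nat by (rule INFM_conjI)
    with hit show "\<exists>\<^sub>\<infinity>t. A (stake t w) \<and> w !! t \<in> E"
      unfolding INFM_nat_le by blast
  qed
qed

lemma AE_INFM_snth_in:
  assumes "measure_pmf.prob p E > 0"
  shows "AE w in stream_space (measure_pmf p). \<exists>\<^sub>\<infinity>t. w !! t \<in> E"
  using AE_INFM_hit_if_INFM[OF assms, of "\<lambda>_. True"] by simp

section \<open>The sampling mix\<close>

abbreviation sender :: "'r input \<Rightarrow> nat" where
  "sender x \<equiv> fst x"

abbreviation recipient :: "'r input \<Rightarrow> 'r" where
  "recipient x \<equiv> fst (snd x)"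

abbreviation released :: "'r input \<Rightarrow> nat set" where
  "released x \<equiv> snd (snd x)"

lemma arrive_apply: "arrive (j, r, S) Q i = (if i = j then Q j @ [r] else Q i)"
  unfolding arrive_def by simp

lemma mix_step_apply:
  "mix_step (j, r, S) Q i = (if i \<in> S then tl (arrive (j, r, S) Q i) else arrive (j, r, S) Q i)"
  unfolding mix_step_def by simp

lemma hd_arrive_in_mix_out:
  assumes "finite S" "i \<in> S" "arrive (j, r, S) Q i \<noteq> []"
  shows "hd (arrive (j, r, S) Q i) \<in># mix_out (j, r, S) Q"
  using assms unfolding mix_out_def by auto

lemma in_mix_outE:
  assumes "r' \<in># mix_out (j, r, S) Q"
  obtains e where "e \<in> S" "arrive (j, r, S) Q e \<noteq> []" "r' = hd (arrive (j, r, S) Q e)"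
  using assms unfolding mix_out_def
  by (cases "finite {i \<in> S. arrive (j, r, S) Q i \<noteq> []}") auto

lemma length_mix_step_less_iff:
  "length (mix_step (j, r, S) Q e) < length (Q e) + (if e = j then 1 else 0) \<longleftrightarrow>
     e \<in> S \<and> arrive (j, r, S) Q e \<noteq> []"
  by (cases "Q e") (auto simp: mix_step_apply arrive_apply)

lemma mix_state_eq_fold: "mix_state w t = fold mix_step (stake t w) (\<lambda>_. [])"
  by (induction t) (simp_all add: stake_Suc del: stake.simps(2))

lemma recipient_in_mix_state_Suc:
  assumes "w !! s = (i, r, S)" "mix_state w s i \<noteq> [] \<or> i \<notin> S"
  shows "r \<in> set (mix_state w (Suc s) i)"
  using assms by (cases "mix_state w s i") (auto simp: mix_step_apply arrive_apply)

lemma mix_state_extends_if_not_released: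
  assumes "t \<le> u" "\<And>s. t \<le> s \<Longrightarrow> s < u \<Longrightarrow> i \<notin> released (w !! s)"
  shows "\<exists>ys. mix_state w u i = mix_state w t i @ ys"
  using assms
proof (induction u)
  case (Suc u)
  show ?case
  proof (cases "t = Suc u")
    case False
    with Suc.prems(1) have "t \<le> u"
      by simp
    have "\<exists>ys. mix_state w u i = mix_state w t i @ ys"
      by (rule Suc.IH[OF \<open>t \<le> u\<close>]) (simp add: Suc.prems(2))
    then obtain ys where ys: "mix_state w u i = mix_state w t i @ ys"
      by blast
    obtain j r S where x: "w !! u = (j, r, S)"
      by (metis prod_cases3)
    have "i \<notin> S"
      using Suc.prems(2)[OF \<open>t \<le> u\<close>] x by simp
    with ys x show ?thesis
      by (auto simp: mix_step_apply arrive_apply)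
  qed simp
qed simp

text \<open>Induction on the number of messages ahead of \<open>r\<close>: the first release of queue \<open>i\<close>
  removes one of them, and arrivals only append.\<close>
lemma reaches_head_of_queue:
  assumes "\<exists>\<^sub>\<infinity>u. i \<in> released (w !! u)" "r \<in> set (mix_state w t i)"
  shows "\<exists>t'\<ge>t. mix_state w t' i \<noteq> [] \<and> hd (mix_state w t' i) = r"
proof -
  obtain pre post where "mix_state w t i = pre @ r # post"
    using assms(2) by (meson split_list)
  then show ?thesis
  proof (induction pre arbitrary: t post)
    case (Cons y pre)
    define u where "u = (LEAST u. t \<le> u \<and> i \<in> released (w !! u))"
    have "\<exists>u. t \<le> u \<and> i \<in> released (w !! u)"
      using assms(1) unfolding INFM_nat_le by blast
    then have u: "t \<le> u \<and> i \<in> released (w !! u)"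
      unfolding u_def by (rule LeastI_ex)
    have before_u: "i \<notin> released (w !! s)" if "t \<le> s" "s < u" for s
      using not_less_Least[of s] that unfolding u_def by blast
    obtain ys where ys: "mix_state w u i = mix_state w t i @ ys"
      using mix_state_extends_if_not_released[of t u i w] u before_u by blast
    obtain j r' S where x: "w !! u = (j, r', S)"
      by (metis prod_cases3)
    have "mix_state w (Suc u) i = pre @ r # (post @ ys @ (if i = j then [r'] else []))"
      using u ys x Cons.prems by (auto simp: mix_step_apply arrive_apply)
    then obtain t' where "Suc u \<le> t'" "mix_state w t' i \<noteq> [] \<and> hd (mix_state w t' i) = r"
      using Cons.IH by blast
    moreover have "t \<le> t'"
      using u \<open>Suc u \<le> t'\<close> by simp
    ultimately show ?case
      by blast
  qed (auto intro: exI[of _ t])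
qed

lemma INFM_hd_mix_state_eq:
  assumes "\<exists>\<^sub>\<infinity>u. i \<in> released (w !! u)"
    and "\<exists>\<^sub>\<infinity>s. sender (w !! s) = i \<and> recipient (w !! s) = r \<and>
                (mix_state w s i \<noteq> [] \<or> i \<notin> released (w !! s))"
  shows "\<exists>\<^sub>\<infinity>t. mix_state w t i \<noteq> [] \<and> hd (mix_state w t i) = r"
  unfolding INFM_nat_le
proof
  fix N
  obtain s where "N \<le> s" and s: "sender (w !! s) = i" "recipient (w !! s) = r"
    "mix_state w s i \<noteq> [] \<or> i \<notin> released (w !! s)"
    using assms(2) unfolding INFM_nat_le by blast
  have "w !! s = (i, r, released (w !! s))"
    using s(1,2) by (metis prod.collapse)
  then have "r \<in> set (mix_state w (Suc s) i)"
    using s(3) by (rule recipient_in_mix_state_Suc)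
  with assms(1) obtain t where "Suc s \<le> t" "mix_state w t i \<noteq> [] \<and> hd (mix_state w t i) = r"
    by (blast dest: reaches_head_of_queue)
  moreover have "N \<le> t"
    using \<open>N \<le> s\<close> \<open>Suc s \<le> t\<close> by simp
  ultimately show "\<exists>t\<ge>N. mix_state w t i \<noteq> [] \<and> hd (mix_state w t i) = r"
    by blast
qed

lemma set_pmf_bernoulli_pmf:
  "0 \<le> p \<Longrightarrow> p \<le> 1 \<Longrightarrow> b \<in> set_pmf (bernoulli_pmf p) \<longleftrightarrow> (if b then 0 < p else p < 1)"
  by (cases b) (auto simp: set_pmf_iff)

lemma set_pmf_sel_pmf:
  assumes "j < n" "k \<le> n - 1" "0 \<le> pa" "pa \<le> 1"
  shows "S \<in> set_pmf (sel_pmf n k pa j) \<longleftrightarrow>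
    0 < pa \<and> (\<exists>T. S = insert j T \<and> T \<subseteq> {0..<n} - {j} \<and> card T = k - 1) \<or>
    pa < 1 \<and> S \<subseteq> {0..<n} - {j} \<and> card S = k"
proof -
  have fin: "finite {T. T \<subseteq> {0..<n} - {j} \<and> card T = k'}" for k'
    by (rule finite_subset[of _ "Pow {0..<n}"]) auto
  have ne: "{T. T \<subseteq> {0..<n} - {j} \<and> card T = k'} \<noteq> {}" if "k' \<le> n - 1" for k'
    using subsets_with_card_nonempty[of "{0..<n} - {j}" k'] that assms(1) by simp
  show ?thesis
    using assms fin ne[of k] ne[of "k - 1"] unfolding sel_pmf_def
    by (auto simp: set_pmf_bernoulli_pmf)
qed

lemma set_sel_pmf_subset:
  "j < n \<Longrightarrow> k \<le> n - 1 \<Longrightarrow> 0 \<le> pa \<Longrightarrow> pa \<le> 1 \<Longrightarrow> S \<in> set_pmf (sel_pmf n k pa j) \<Longrightarrow>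
     S \<subseteq> {0..<n}"
  by (auto simp: set_pmf_sel_pmf)

lemma set_pmf_input_pmf:
  "0 < n \<Longrightarrow> (j, r, S) \<in> set_pmf (input_pmf n k pa q) \<longleftrightarrow>
     j < n \<and> r \<in> set_pmf (q j) \<and> S \<in> set_pmf (sel_pmf n k pa j)"
  unfolding input_pmf_def by auto

section \<open>Identification from outputs at unreleased queues\<close>

lemma length_mix_state_eq_if_mix_obs_eq:
  assumes "\<forall>s<T. mix_obs n w' s = mix_obs n w s" "t \<le> T" "e < n"
  shows "length (mix_state w' t e) = length (mix_state w t e)"
proof (cases t)
  case (Suc s)
  with assms(1,2) have "mix_obs n w' s = mix_obs n w s"
    by simp
  with assms(3) show ?thesis
    unfolding mix_obs_def Suc by simp
qed simp

lemma set_mix_state_subset: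
  assumes "\<And>s. s < t \<Longrightarrow> recipient (w !! s) \<in> R (sender (w !! s))"
  shows "set (mix_state w t e) \<subseteq> R e"
  using assms
proof (induction t arbitrary: e)
  case (Suc t)
  obtain j r S where x: "w !! t = (j, r, S)"
    by (metis prod_cases3)
  with Suc.prems[of t] have "r \<in> R j"
    by simp
  moreover have "set (mix_state w t e') \<subseteq> R e'" for e'
    by (rule Suc.IH) (simp add: Suc.prems)
  ultimately have "set (arrive (j, r, S) (mix_state w t) e) \<subseteq> R e"
    by (auto simp: arrive_apply)
  moreover have "set (mix_state w (Suc t) e) \<subseteq> set (arrive (j, r, S) (mix_state w t) e)"
    using x by (cases "arrive (j, r, S) (mix_state w t) e") (auto simp: mix_step_apply)
  ultimately show ?case
    by (rule order_trans[rotated])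
qed simp

lemma possible_input_recipient: "possible_input n k pa R x \<Longrightarrow> recipient x \<in> R (sender x)"
  by (cases x) (simp add: possible_input_def)

text \<open>Observed queue lengths reveal which queues emitted a message.\<close>
lemma emitting_queue_released_if_mix_obs_eq:
  assumes "\<forall>s<T. mix_obs n w' s = mix_obs n w s" "t < T" "e < n"
    and "e \<in> released (w' !! t)" "arrive (w' !! t) (mix_state w' t) e \<noteq> []"
  shows "e \<in> released (w !! t)"
proof -
  obtain j r S where x: "w !! t = (j, r, S)"
    by (metis prod_cases3)
  obtain j' r' S' where x': "w' !! t = (j', r', S')"
    by (metis prod_cases3)
  have "j' = j"
    using assms(1,2) x x' unfolding mix_obs_def by auto
  have lengths: "length (mix_state w' s e) = length (mix_state w s e)" if "s \<le> T" for s
    using assms(1) that assms(3) by (rule length_mix_state_eq_if_mix_obs_eq)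
  have "length (mix_state w' (Suc t) e) < length (mix_state w' t e) + (if e = j' then 1 else 0)"
    using assms(4,5) x' length_mix_step_less_iff[of j' r' S' "mix_state w' t" e] by simp
  then have "length (mix_state w (Suc t) e) < length (mix_state w t e) + (if e = j then 1 else 0)"
    using lengths[of t] lengths[of "Suc t"] \<open>t < T\<close> \<open>j' = j\<close> by simp
  then show ?thesis
    using x length_mix_step_less_iff[of j r S "mix_state w t" e] by simp
qed

text \<open>An output explained by queue \<open>e\<close> of a consistent hypothetical run was emitted by
  queue \<open>e\<close> in the actual run, and all messages in queue \<open>e\<close> of the hypothetical run are
  receivers of \<open>e\<close> under the hypothesis \<open>R'\<close>.\<close>
lemma released_queue_of_output:
  assumes "k \<le> n - 1" "0 \<le> pa" "pa \<le> 1"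
    and consistent: "\<forall>s<T. possible_input n k pa R' (w' !! s) \<and> mix_obs n w' s = mix_obs n w s"
    and "t < T" "r \<in># mix_out (w !! t) (mix_state w t)"
  shows "\<exists>e<n. e \<in> released (w !! t) \<and> r \<in> R' e"
proof -
  obtain j r0 S where x: "w' !! t = (j, r0, S)"
    by (metis prod_cases3)
  have obs: "mix_obs n w' t = mix_obs n w t" and "possible_input n k pa R' (w' !! t)"
    using consistent \<open>t < T\<close> by auto
  then have input: "j < n" "r0 \<in> R' j" "S \<in> set_pmf (sel_pmf n k pa j)"
    using x unfolding possible_input_def by auto
  have "r \<in># mix_out (j, r0, S) (mix_state w' t)"
    using obs assms(6) x unfolding mix_obs_def by auto
  then obtain e where e: "e \<in> S" "arrive (j, r0, S) (mix_state w' t) e \<noteq> []"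
    "r = hd (arrive (j, r0, S) (mix_state w' t) e)"
    by (rule in_mix_outE)
  have "e < n"
    using set_sel_pmf_subset[OF input(1) assms(1-3) input(3)] e(1) by auto
  have "\<forall>s<T. mix_obs n w' s = mix_obs n w s"
    using consistent by blast
  then have "e \<in> released (w !! t)"
    using \<open>t < T\<close> \<open>e < n\<close>
    by (rule emitting_queue_released_if_mix_obs_eq) (use e(1,2) x in simp_all)
  have "recipient (w' !! s) \<in> R' (sender (w' !! s))" if "s < t" for s
    using consistent that \<open>t < T\<close> possible_input_recipient by (meson less_trans)
  then have "set (arrive (j, r0, S) (mix_state w' t) e) \<subseteq> R' e"
    using set_mix_state_subset[of t w' R' e] input(2) by (auto simp: arrive_apply)
  then have "r \<in> R' e"
    using e(2,3) hd_in_set by blast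
  with \<open>e < n\<close> \<open>e \<in> released (w !! t)\<close> show ?thesis
    by blast
qed

text \<open>Step \<open>t\<close> shows the adversary receiver \<open>r\<close> leaving the mix while queue \<open>d\<close> is
  not released, so \<open>r\<close> cannot be a receiver of sender \<open>d\<close>.\<close>
definition rules_out :: "'r input stream \<Rightarrow> nat \<Rightarrow> nat \<Rightarrow> 'r \<Rightarrow> bool" where
  "rules_out w t d r \<longleftrightarrow> r \<in># mix_out (w !! t) (mix_state w t) \<and> d \<notin> released (w !! t)"

lemma rules_out_if_hd_arrive:
  assumes "finite (released (w !! t))" "i \<in> released (w !! t)" "d \<notin> released (w !! t)"
    and "arrive (w !! t) (mix_state w t) i \<noteq> []" "hd (arrive (w !! t) (mix_state w t) i) = r"
  shows "rules_out w t d r"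
proof -
  obtain j r' S where x: "w !! t = (j, r', S)"
    by (metis prod_cases3)
  with assms show ?thesis
    unfolding rules_out_def using hd_arrive_in_mix_out[of S i j r' "mix_state w t"] by auto
qed

text \<open>If the queue \<open>e\<close> with \<open>r \<in> R' e\<close> were not \<open>i\<close>, a step ruling out \<open>e\<close> would emit
  \<open>r\<close> from another queue \<open>e'\<close> with \<open>r \<in> R' e'\<close>, contradicting disjointness.\<close>
lemma receivers_subset_if_rules_out:
  fixes R R' :: "nat \<Rightarrow> 'r set"
  assumes "1 < n" "k \<le> n - 1" "0 \<le> pa" "pa \<le> 1" "i < n"
    and rules_out: "\<And>i r d. i < n \<Longrightarrow> r \<in> R i \<Longrightarrow> d < n \<Longrightarrow> d \<noteq> i \<Longrightarrow> \<exists>t<T. rules_out w t d r"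
    and consistent: "\<forall>t<T. possible_input n k pa R' (w' !! t) \<and> mix_obs n w' t = mix_obs n w t"
    and disjoint: "\<And>e e' r. e < n \<Longrightarrow> e' < n \<Longrightarrow> r \<in> R' e \<Longrightarrow> r \<in> R' e' \<Longrightarrow> e = e'"
  shows "R i \<subseteq> R' i"
proof
  fix r
  assume "r \<in> R i"
  have source: "\<exists>e<n. e \<in> released (w !! t) \<and> r \<in> R' e" if "t < T" "rules_out w t d r" for t d
    using released_queue_of_output[OF assms(2-4) consistent] that unfolding rules_out_def by blast
  obtain d where "d < n" "d \<noteq> i"
    using \<open>1 < n\<close> by (metis less_one not_less_zero zero_less_iff_neq_zero)
  with rules_out \<open>i < n\<close> \<open>r \<in> R i\<close> obtain t where "t < T" "rules_out w t d r"
    by blast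
  with source obtain e where e: "e < n" "r \<in> R' e"
    by blast
  have "e = i"
  proof (rule ccontr)
    assume "e \<noteq> i"
    with rules_out \<open>i < n\<close> \<open>r \<in> R i\<close> \<open>e < n\<close> obtain t' where "t' < T" "rules_out w t' e r"
      by blast
    with source obtain e' where "e' < n" "e' \<in> released (w !! t')" "r \<in> R' e'"
      by blast
    with \<open>rules_out w t' e r\<close> e disjoint show False
      unfolding rules_out_def by blast
  qed
  with e show "r \<in> R' i"
    by simp
qed

lemma identified_if_rules_out:
  fixes R :: "nat \<Rightarrow> 'r set"
  assumes "1 < n" "k \<le> n - 1" "0 \<le> pa" "pa \<le> 1" "a < n"
    and "\<And>i r d. i < n \<Longrightarrow> r \<in> R i \<Longrightarrow> d < n \<Longrightarrow> d \<noteq> i \<Longrightarrow> \<exists>t<T. rules_out w t d r"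
  shows "identified n k m pa R a w T"
  unfolding identified_def
proof (intro allI impI, elim conjE)
  fix R' :: "nat \<Rightarrow> 'r set" and w'
  assume "receiver_sets n m R'" and union: "(\<Union>i<n. R' i) = (\<Union>i<n. R i)"
    and consistent: "\<forall>t<T. possible_input n k pa R' (w' !! t) \<and> mix_obs n w' t = mix_obs n w t"
  have disjoint: "e = e'" if "e < n" "e' < n" "r \<in> R' e" "r \<in> R' e'" for e e' r
    using \<open>receiver_sets n m R'\<close> that unfolding receiver_sets_def by blast
  have R_subset: "R i \<subseteq> R' i" if "i < n" for i
    using assms(1-4) that assms(6) consistent disjoint by (rule receivers_subset_if_rules_out)
  show "R' a = R a"
  proof
    show "R a \<subseteq> R' a"
      using R_subset \<open>a < n\<close> .
    show "R' a \<subseteq> R a"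
    proof
      fix r
      assume "r \<in> R' a"
      with union \<open>a < n\<close> obtain i where "i < n" "r \<in> R i"
        by blast
      with R_subset disjoint \<open>r \<in> R' a\<close> \<open>a < n\<close> have "i = a"
        by blast
      with \<open>r \<in> R i\<close> show "r \<in> R a"
        by simp
    qed
  qed
qed

section \<open>Almost surely every wrong sender is ruled out\<close>

lemma prob_arrival_pos:
  assumes "i < n" "r \<in> set_pmf (q i)"
  shows "measure_pmf.prob (input_pmf n k pa q) {x. sender x = i \<and> recipient x = r} > 0"
proof -
  obtain S where "S \<in> set_pmf (sel_pmf n k pa i)"
    using set_pmf_not_empty by fast
  with assms have "(i, r, S) \<in> set_pmf (input_pmf n k pa q)"
    by (simp add: set_pmf_input_pmf)
  then show ?thesis
    by (rule measure_pmf_posI) simp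
qed

context
  fixes n k :: nat and pa :: real and q :: "nat \<Rightarrow> 'r pmf"
  assumes k_le: "k \<le> n - 1" and pa_nonneg: "0 \<le> pa" and pa_le_1: "pa \<le> 1"
begin

lemma finite_released_if_in_set_pmf:
  assumes "0 < n" "x \<in> set_pmf (input_pmf n k pa q)"
  shows "finite (released x)"
proof -
  obtain j r S where x: "x = (j, r, S)"
    by (metis prod_cases3)
  with assms have "j < n" "S \<in> set_pmf (sel_pmf n k pa j)"
    by (simp_all add: set_pmf_input_pmf)
  then have "S \<subseteq> {0..<n}"
    using set_sel_pmf_subset k_le pa_nonneg pa_le_1 by blast
  with x show ?thesis
    using finite_subset by auto
qed

text \<open>If \<open>pa < 1\<close>, sender \<open>d\<close> may release \<open>i\<close> but not its own queue; otherwise a third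
  sender releases its own queue and \<open>i\<close>, for which \<open>k \<ge> 2\<close> is needed.\<close>
lemma prob_release_avoiding_pos:
  assumes "2 \<le> k" "i < n" "d < n" "d \<noteq> i"
  shows "measure_pmf.prob (input_pmf n k pa q) {x. i \<in> released x \<and> d \<notin> released x} > 0"
proof (cases "pa < 1")
  case True
  have "\<exists>T. {i} \<subseteq> T \<and> T \<subseteq> {0..<n} - {d} \<and> card T = k"
    by (rule exists_subset_between_atLeastLessThan) (use assms k_le in auto)
  then obtain T where T: "{i} \<subseteq> T" "T \<subseteq> {0..<n} - {d}" "card T = k"
    by blast
  obtain r where "r \<in> set_pmf (q d)"
    using set_pmf_not_empty by fast
  with True T(2,3) assms have "(d, r, T) \<in> set_pmf (input_pmf n k pa q)"
    by (simp add: set_pmf_input_pmf set_pmf_sel_pmf[OF _ k_le pa_nonneg pa_le_1])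
  then show ?thesis
    by (rule measure_pmf_posI) (use T in auto)
next
  case False
  then have "0 < pa"
    by simp
  have "card ({0..<n} - {i, d}) = n - 2"
    using assms by (simp add: card_Diff_subset)
  moreover have "0 < n - 2"
    using assms k_le by linarith
  ultimately obtain j where "j \<in> {0..<n} - {i, d}"
    by (metis card.empty less_irrefl ex_in_conv)
  then have j: "j < n" "j \<noteq> i" "j \<noteq> d"
    by auto
  have "\<exists>T. {i} \<subseteq> T \<and> T \<subseteq> {0..<n} - {j, d} \<and> card T = k - 1"
    by (rule exists_subset_between_atLeastLessThan) (use assms k_le j in auto)
  then obtain T where T: "{i} \<subseteq> T" "T \<subseteq> {0..<n} - {j, d}" "card T = k - 1"
    by blast
  obtain r where "r \<in> set_pmf (q j)"
    using set_pmf_not_empty by fast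
  with \<open>0 < pa\<close> T j have "(j, r, insert j T) \<in> set_pmf (input_pmf n k pa q)"
    by (auto simp: set_pmf_input_pmf set_pmf_sel_pmf[OF _ k_le pa_nonneg pa_le_1])
  then show ?thesis
    by (rule measure_pmf_posI) (use T j in auto)
qed

lemma prob_arrival_release_avoiding_pos:
  assumes "0 < pa" "i < n" "r \<in> set_pmf (q i)" "d < n" "d \<noteq> i"
  shows "measure_pmf.prob (input_pmf n k pa q)
           {x. sender x = i \<and> recipient x = r \<and> i \<in> released x \<and> d \<notin> released x} > 0"
proof -
  have "{T. T \<subseteq> {0..<n} - {i, d} \<and> card T = k - 1} \<noteq> {}"
    by (rule subsets_with_card_nonempty) (use assms k_le in \<open>auto simp: card_Diff_subset\<close>)
  then obtain T where T: "T \<subseteq> {0..<n} - {i, d}" "card T = k - 1"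
    by blast
  with assms have "(i, r, insert i T) \<in> set_pmf (input_pmf n k pa q)"
    by (auto simp: set_pmf_input_pmf set_pmf_sel_pmf[OF _ k_le pa_nonneg pa_le_1])
  then show ?thesis
    by (rule measure_pmf_posI) (use T assms in auto)
qed

lemma prob_arrival_unreleased_pos:
  assumes "pa < 1" "i < n" "r \<in> set_pmf (q i)"
  shows "measure_pmf.prob (input_pmf n k pa q)
           {x. sender x = i \<and> recipient x = r \<and> i \<notin> released x} > 0"
proof -
  have "{T. T \<subseteq> {0..<n} - {i} \<and> card T = k} \<noteq> {}"
    by (rule subsets_with_card_nonempty) (use assms k_le in \<open>auto simp: card_Diff_subset\<close>)
  then obtain T where T: "T \<subseteq> {0..<n} - {i}" "card T = k"
    by blast
  with assms have "(i, r, T) \<in> set_pmf (input_pmf n k pa q)"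
    by (simp add: set_pmf_input_pmf set_pmf_sel_pmf[OF _ k_le pa_nonneg pa_le_1])
  then show ?thesis
    by (rule measure_pmf_posI) (use T in auto)
qed

text \<open>Queue \<open>i\<close> is released infinitely often, so a receiver \<open>r\<close> that enters it infinitely
  often is infinitely often at its head; at one of these times a step releasing \<open>i\<close> but not
  \<open>d\<close> forwards \<open>r\<close>.\<close>
lemma AE_rules_out_if_INFM_enqueued:
  assumes "2 \<le> k" "i < n" "d < n" "d \<noteq> i"
  shows "AE w in stream_space (measure_pmf (input_pmf n k pa q)).
    (\<exists>\<^sub>\<infinity>s. sender (w !! s) = i \<and> recipient (w !! s) = r \<and>
            (mix_state w s i \<noteq> [] \<or> i \<notin> released (w !! s))) \<longrightarrow>
    (\<exists>t. rules_out w t d r)"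
proof -
  let ?E = "{x :: 'r input. i \<in> released x \<and> d \<notin> released x}"
  have pos: "measure_pmf.prob (input_pmf n k pa q) ?E > 0"
    using assms by (rule prob_release_avoiding_pos)
  have "AE w in stream_space (measure_pmf (input_pmf n k pa q)).
      (\<exists>\<^sub>\<infinity>t. mix_state w t i \<noteq> [] \<and> hd (mix_state w t i) = r) \<longrightarrow>
      (\<exists>t. (mix_state w t i \<noteq> [] \<and> hd (mix_state w t i) = r) \<and> w !! t \<in> ?E)"
    using AE_hit_if_INFM[OF pos,
        of "\<lambda>h. fold mix_step h (\<lambda>_. []) i \<noteq> [] \<and> hd (fold mix_step h (\<lambda>_. []) i) = r"]
    by (simp only: mix_state_eq_fold[symmetric])
  then show ?thesis
    using AE_stream_snth_in_set_pmf AE_INFM_snth_in[OF pos]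
  proof eventually_elim
    case (elim w)
    show ?case
    proof
      assume "\<exists>\<^sub>\<infinity>s. sender (w !! s) = i \<and> recipient (w !! s) = r \<and>
          (mix_state w s i \<noteq> [] \<or> i \<notin> released (w !! s))"
      moreover have "\<exists>\<^sub>\<infinity>u. i \<in> released (w !! u)"
        using elim(3) by (rule INFM_mono) simp
      ultimately have "\<exists>\<^sub>\<infinity>t. mix_state w t i \<noteq> [] \<and> hd (mix_state w t i) = r"
        by (intro INFM_hd_mix_state_eq)
      with elim(1) obtain t where t: "mix_state w t i \<noteq> []" "hd (mix_state w t i) = r"
        "w !! t \<in> ?E"
        by blast
      obtain j r' S where "w !! t = (j, r', S)"
        by (metis prod_cases3)
      with t have "arrive (w !! t) (mix_state w t) i \<noteq> []"
        "hd (arrive (w !! t) (mix_state w t) i) = r"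
        by (auto simp: arrive_apply)
      then have "rules_out w t d r"
        using t(3) finite_released_if_in_set_pmf \<open>i < n\<close> elim(2)
        by (intro rules_out_if_hd_arrive[where i = i]) auto
      then show "\<exists>t. rules_out w t d r" ..
    qed
  qed
qed

lemma AE_rules_out_if_INFM_empty:
  assumes "0 < pa" "i < n" "r \<in> set_pmf (q i)" "d < n" "d \<noteq> i"
  shows "AE w in stream_space (measure_pmf (input_pmf n k pa q)).
    (\<exists>\<^sub>\<infinity>t. mix_state w t i = []) \<longrightarrow> (\<exists>t. rules_out w t d r)"
proof -
  let ?E = "{x. sender x = i \<and> recipient x = r \<and> i \<in> released x \<and> d \<notin> released x}"
  have "AE w in stream_space (measure_pmf (input_pmf n k pa q)).
      (\<exists>\<^sub>\<infinity>t. mix_state w t i = []) \<longrightarrow> (\<exists>t. mix_state w t i = [] \<and> w !! t \<in> ?E)"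
    using AE_hit_if_INFM[OF prob_arrival_release_avoiding_pos[OF assms],
        of "\<lambda>h. fold mix_step h (\<lambda>_. []) i = []"]
    by (simp only: mix_state_eq_fold[symmetric])
  with AE_stream_snth_in_set_pmf show ?thesis
  proof eventually_elim
    case (elim w)
    show ?case
    proof
      assume "\<exists>\<^sub>\<infinity>t. mix_state w t i = []"
      with elim(2) obtain t where t: "mix_state w t i = []" "w !! t \<in> ?E"
        by blast
      then have "arrive (w !! t) (mix_state w t) i = [r]"
        by (cases "w !! t") (auto simp: arrive_apply)
      then have "rules_out w t d r"
        using t(2) finite_released_if_in_set_pmf \<open>i < n\<close> elim(1)
        by (intro rules_out_if_hd_arrive[where i = i]) auto
      then show "\<exists>t. rules_out w t d r" ..
    qed
  qed
qed

text \<open>If \<open>pa < 1\<close>, arrivals from \<open>i\<close> to \<open>r\<close> that do not release \<open>i\<close> enqueue \<open>r\<close>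
  infinitely often. If \<open>pa = 1\<close>, either queue \<open>i\<close> is empty infinitely often, or it is
  eventually never empty and every arrival from \<open>i\<close> to \<open>r\<close> enqueues \<open>r\<close>.\<close>
lemma AE_ex_rules_out:
  assumes "2 \<le> k" "i < n" "r \<in> set_pmf (q i)" "d < n" "d \<noteq> i"
  shows "AE w in stream_space (measure_pmf (input_pmf n k pa q)). \<exists>t. rules_out w t d r"
proof (cases "pa < 1")
  case True
  show ?thesis
    using AE_rules_out_if_INFM_enqueued[where r = r, OF assms(1,2,4,5)]
      AE_INFM_snth_in[OF prob_arrival_unreleased_pos[OF True assms(2,3)]]
  proof eventually_elim
    case (elim w)
    have "\<exists>\<^sub>\<infinity>s. sender (w !! s) = i \<and> recipient (w !! s) = r \<and>
        (mix_state w s i \<noteq> [] \<or> i \<notin> released (w !! s))"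
      using elim(2) by (rule INFM_mono) simp
    with elim(1) show ?case
      by blast
  qed
next
  case False
  then have "0 < pa"
    by simp
  show ?thesis
    using AE_rules_out_if_INFM_empty[OF \<open>0 < pa\<close> assms(2-5)]
      AE_rules_out_if_INFM_enqueued[where r = r, OF assms(1,2,4,5)]
      AE_INFM_snth_in[OF prob_arrival_pos[where q = q and k = k and pa = pa, OF assms(2,3)]]
  proof eventually_elim
    case (elim w)
    show ?case
    proof (cases "\<exists>\<^sub>\<infinity>t. mix_state w t i = []")
      case False
      then have "\<forall>\<^sub>\<infinity>s. mix_state w s i \<noteq> []"
        by simp
      with elim(3) have "\<exists>\<^sub>\<infinity>s. w !! s \<in> {x. sender x = i \<and> recipient x = r} \<and> mix_state w s i \<noteq> []"
        by (rule INFM_conjI)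
      then have "\<exists>\<^sub>\<infinity>s. sender (w !! s) = i \<and> recipient (w !! s) = r \<and>
          (mix_state w s i \<noteq> [] \<or> i \<notin> released (w !! s))"
        by (rule INFM_mono) simp
      with elim(2) show ?thesis
        by blast
    qed (use elim(1) in blast)
  qed
qed

end

lemma AE_ex_bound_rules_out:
  assumes "2 \<le> k" "k \<le> n - 1" "0 \<le> pa" "pa \<le> 1"
    and "\<And>i. i < n \<Longrightarrow> finite (R i)" "\<And>i. i < n \<Longrightarrow> set_pmf (q i) = R i"
  shows "AE w in stream_space (measure_pmf (input_pmf n k pa q)).
    \<exists>T. \<forall>i<n. \<forall>r\<in>R i. \<forall>d<n. d \<noteq> i \<longrightarrow> (\<exists>t<T. rules_out w t d r)"
proof -
  define triples where "triples = (SIGMA i:{..<n}. R i \<times> ({..<n} - {i}))"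
  have "finite triples"
    using assms(5) unfolding triples_def by auto
  have "AE w in stream_space (measure_pmf (input_pmf n k pa q)).
      \<forall>y\<in>triples. \<exists>t. rules_out w t (snd (snd y)) (fst (snd y))"
  proof (rule AE_ball_countable')
    fix y
    assume "y \<in> triples"
    with assms(6) show "AE w in stream_space (measure_pmf (input_pmf n k pa q)).
        \<exists>t. rules_out w t (snd (snd y)) (fst (snd y))"
      unfolding triples_def by (auto intro!: AE_ex_rules_out assms(1-4))
  qed (use \<open>finite triples\<close> countable_finite in blast)
  then show ?thesis
  proof (rule eventually_mono)
    fix w
    assume "\<forall>y\<in>triples. \<exists>t. rules_out w t (snd (snd y)) (fst (snd y))"
    then obtain T where T: "\<forall>y\<in>triples. \<exists>t<T. rules_out w t (snd (snd y)) (fst (snd y))"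
      using finite_ball_ex_less[OF \<open>finite triples\<close>,
          where P = "\<lambda>y t. rules_out w t (snd (snd y)) (fst (snd y))"]
      by blast
    have "\<exists>t<T. rules_out w t d r" if "i < n" "r \<in> R i" "d < n" "d \<noteq> i" for i r d
      using that T[rule_format, of "(i, r, d)"] by (simp add: triples_def)
    then show "\<exists>T. \<forall>i<n. \<forall>r\<in>R i. \<forall>d<n. d \<noteq> i \<longrightarrow> (\<exists>t<T. rules_out w t d r)"
      by blast
  qed
qed

theorem theorem4:
  fixes n k m a :: nat and pa :: real
    and R :: "nat \<Rightarrow> 'r set" and q :: "nat \<Rightarrow> 'r pmf"
  assumes "2 \<le> k" and "k \<le> n - 1"
    and "0 \<le> pa" and "pa \<le> 1"
    and "receiver_sets n m R"
    and "\<And>i. i < n \<Longrightarrow> R i \<noteq> {}"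
    and "\<And>i. i < n \<Longrightarrow> set_pmf (q i) = R i"
    and "a < n"
  shows "AE w in stream_space (measure_pmf (input_pmf n k pa q)).
           \<exists>T. identified n k m pa R a w T"
proof -
  have finite_R: "finite (R i)" if "i < n" for i
    using assms(5) that unfolding receiver_sets_def by blast
  have "AE w in stream_space (measure_pmf (input_pmf n k pa q)).
      \<exists>T. \<forall>i<n. \<forall>r\<in>R i. \<forall>d<n. d \<noteq> i \<longrightarrow> (\<exists>t<T. rules_out w t d r)"
    using assms(1-4) finite_R assms(7) by (rule AE_ex_bound_rules_out)
  then show ?thesis
  proof (rule eventually_mono)
    fix w
    assume "\<exists>T. \<forall>i<n. \<forall>r\<in>R i. \<forall>d<n. d \<noteq> i \<longrightarrow> (\<exists>t<T. rules_out w t d r)"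
    then obtain T where "\<forall>i<n. \<forall>r\<in>R i. \<forall>d<n. d \<noteq> i \<longrightarrow> (\<exists>t<T. rules_out w t d r)"
      by blast
    with assms have "identified n k m pa R a w T"
      by (intro identified_if_rules_out) auto
    then show "\<exists>T. identified n k m pa R a w T" ..
  qed
qed

end
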